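(* Let $f:[0,1]\to\mathbb{R}^{+}$ be a decreasing function with continuous first and second derivatives. Let $a,b>0$ and define $t(x)=1-a(1-x)\dfrac{f(x)}{f(x)+b}$. If $f''(x)\bigl(f(x)+b\bigr)\ge 2\bigl(f'(x)\bigr)^2$ for all $x$, then $t$ is concave. *)

theory Defs
  imports "HOL-Analysis.Analysis"
begin

end

theory Submission
  imports Defs
begin

text \<open>Write the function as \<open>1 - g\<close> with \<open>g x = a (1 - x) f x / (f x + b)\<close>. On the open
  interval \<open>g'' = a (-2 b f' / (f + b)\<^sup>2 + (1 - x) b (f'' (f + b) - 2 f'\<^sup>2) / (f + b)\<^sup>3)\<close>:
  the first summand is nonnegative because \<open>f\<close> decreases, the second by the hypothesis on \<open>f''\<close>.
  So \<open>g\<close> is convex on \<open>(0, 1)\<close>, and by continuity on \<open>[0, 1]\<close>.\<close>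

lemma convex_on_closure:
  fixes f :: "'a::real_normed_vector \<Rightarrow> real"
  assumes "convex S" "convex_on S f" "continuous_on (closure S) f"
  shows "convex_on (closure S) f"
proof (rule convex_onI)
  show "convex (closure S)"
    using assms(1) by simp
next
  fix t :: real and x y
  assume t: "0 < t" "t < 1" and x: "x \<in> closure S" and y: "y \<in> closure S"
  have f_lim: "(\<lambda>n. f (z n)) \<longlonglongrightarrow> f l" if "\<forall>n. z n \<in> S" "z \<longlonglongrightarrow> l" "l \<in> closure S" for z l
    using assms(3) that closure_subset unfolding continuous_on_sequentially comp_def by blast
  obtain u where u: "\<forall>n. u n \<in> S" "u \<longlonglongrightarrow> x"
    using x closure_sequential by blast
  obtain v where v: "\<forall>n. v n \<in> S" "v \<longlonglongrightarrow> y"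
    using y closure_sequential by blast
  have "\<forall>n. (1 - t) *\<^sub>R u n + t *\<^sub>R v n \<in> S"
    using u(1) v(1) t assms(1) by (simp add: convexD)
  moreover have "(\<lambda>n. (1 - t) *\<^sub>R u n + t *\<^sub>R v n) \<longlonglongrightarrow> (1 - t) *\<^sub>R x + t *\<^sub>R y"
    by (intro tendsto_intros u v)
  moreover have "(1 - t) *\<^sub>R x + t *\<^sub>R y \<in> closure S"
    using x y t convex_closure[OF assms(1)] by (simp add: convexD)
  ultimately have "(\<lambda>n. f ((1 - t) *\<^sub>R u n + t *\<^sub>R v n)) \<longlonglongrightarrow> f ((1 - t) *\<^sub>R x + t *\<^sub>R y)"
    by (rule f_lim)
  moreover have "(\<lambda>n. (1 - t) * f (u n) + t * f (v n)) \<longlonglongrightarrow> (1 - t) * f x + t * f y"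
    using f_lim[OF u] f_lim[OF v] x y by (intro tendsto_intros)
  moreover have "f ((1 - t) *\<^sub>R u n + t *\<^sub>R v n) \<le> (1 - t) * f (u n) + t * f (v n)" for n
    using u(1) v(1) t by (intro convex_onD[OF assms(2)]) auto
  ultimately show "f ((1 - t) *\<^sub>R x + t *\<^sub>R y) \<le> (1 - t) * f x + t * f y"
    by (intro LIMSEQ_le) auto
qed

lemma has_real_derivative_nonpos_if_antimono:
  assumes "(f has_real_derivative D) (at x within S)" "at x within S \<noteq> bot" "x \<in> S"
    and "\<And>y z. y \<in> S \<Longrightarrow> z \<in> S \<Longrightarrow> y \<le> z \<Longrightarrow> f z \<le> f y"
  shows "D \<le> 0"
proof (rule tendsto_upperbound)
  show "((\<lambda>y. (f y - f x) / (y - x)) \<longlongrightarrow> D) (at x within S)"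
    using assms(1) by (simp add: has_field_derivative_iff)
  show "\<forall>\<^sub>F y in at x within S. (f y - f x) / (y - x) \<le> 0"
    unfolding eventually_at_filter
  proof (intro always_eventually allI impI)
    fix y assume "y \<noteq> x" "y \<in> S"
    then show "(f y - f x) / (y - x) \<le> 0"
      using assms(3) assms(4)[of x y] assms(4)[of y x]
      by (cases "x \<le> y") (auto simp: divide_nonpos_pos divide_nonneg_neg)
  qed
qed (use assms(2) in simp)

lemma convex_on_one_minus_times_ratio:
  fixes f f' f'' :: "real \<Rightarrow> real" and a b :: real
  assumes "convex C" "a \<ge> 0" "b \<ge> 0"
    and C: "\<And>x. x \<in> C \<Longrightarrow> x \<le> 1" "\<And>x. x \<in> C \<Longrightarrow> f x + b > 0" "\<And>x. x \<in> C \<Longrightarrow> f' x \<le> 0"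
    and d1: "\<And>x. x \<in> C \<Longrightarrow> (f has_real_derivative f' x) (at x)"
    and d2: "\<And>x. x \<in> C \<Longrightarrow> (f' has_real_derivative f'' x) (at x)"
    and ineq: "\<And>x. x \<in> C \<Longrightarrow> 2 * (f' x)\<^sup>2 \<le> f'' x * (f x + b)"
  shows "convex_on C (\<lambda>x. a * (1 - x) * (f x / (f x + b)))"
proof (rule f''_ge0_imp_convex[OF \<open>convex C\<close>])
  fix x assume x: "x \<in> C"
  have F: "f x + b \<noteq> 0"
    using C(2)[OF x] by simp
  show "((\<lambda>x. a * (1 - x) * (f x / (f x + b))) has_real_derivative
      a * (- (f x / (f x + b)) + (1 - x) * (b * f' x / (f x + b)^2))) (at x)"
    using d1[OF x] F
    apply (auto intro!: derivative_eq_intros)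
    apply (simp add: divide_simps power2_eq_square)
    by algebra
  show "((\<lambda>x. a * (- (f x / (f x + b)) + (1 - x) * (b * f' x / (f x + b)^2))) has_real_derivative
      a * (- 2 * b * f' x / (f x + b)^2
        + (1 - x) * b * (f'' x * (f x + b) - 2 * (f' x)^2) / (f x + b)^3)) (at x)"
    using d1[OF x] d2[OF x] F
    apply (auto intro!: derivative_eq_intros)
    apply (simp add: divide_simps power2_eq_square power3_eq_cube)
    by algebra
  have "- 2 * b * f' x / (f x + b)^2 \<ge> 0"
    using assms(3) C(2,3)[OF x] by (intro divide_nonneg_pos) (auto simp: mult_nonneg_nonpos)
  moreover have "(1 - x) * b * (f'' x * (f x + b) - 2 * (f' x)^2) / (f x + b)^3 \<ge> 0"
    using assms(3) C(1,2)[OF x] ineq[OF x] by (intro divide_nonneg_pos mult_nonneg_nonneg) auto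
  ultimately show "a * (- 2 * b * f' x / (f x + b)^2
      + (1 - x) * b * (f'' x * (f x + b) - 2 * (f' x)^2) / (f x + b)^3) \<ge> 0"
    using assms(2) by simp
qed

theorem proposition2:
  fixes f f' f'' :: "real \<Rightarrow> real" and a b :: real
  assumes pos: "\<And>x. x \<in> {0..1} \<Longrightarrow> f x > 0"
    and decr: "\<And>x y. x \<in> {0..1} \<Longrightarrow> y \<in> {0..1} \<Longrightarrow> x \<le> y \<Longrightarrow> f y \<le> f x"
    and d1: "\<And>x. x \<in> {0..1} \<Longrightarrow> (f has_real_derivative f' x) (at x within {0..1})"
    and d2: "\<And>x. x \<in> {0..1} \<Longrightarrow> (f' has_real_derivative f'' x) (at x within {0..1})"
    and "continuous_on {0..1} f'"
    and "continuous_on {0..1} f''"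
    and ab: "a > 0" "b > 0"
    and ineq: "\<And>x. x \<in> {0..1} \<Longrightarrow> f'' x * (f x + b) \<ge> 2 * (f' x)\<^sup>2"
  shows "concave_on {0..1} (\<lambda>x. 1 - a * (1 - x) * (f x / (f x + b)))"
proof -
  let ?g = "\<lambda>x. a * (1 - x) * (f x / (f x + b))"
  have "f' x \<le> 0" if "x \<in> {0..1}" for x
    using that by (intro has_real_derivative_nonpos_if_antimono[OF d1 _ that decr])
      (auto simp: trivial_limit_within)
  moreover have "(f has_real_derivative f' x) (at x)" "(f' has_real_derivative f'' x) (at x)"
    if "x \<in> {0<..<1}" for x
    using d1[of x] d2[of x] that by (simp_all add: at_within_Icc_at)
  ultimately have "convex_on {0<..<1} ?g"
    using ab pos ineq
    by (intro convex_on_one_minus_times_ratio[where f' = f' and f'' = f'']) (auto simp: add_pos_pos)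
  moreover have "continuous_on {0..1} ?g"
  proof -
    have "continuous_on {0..1} f"
      using d1 by (meson has_field_derivative_imp_has_derivative has_derivative_continuous_on)
    then show ?thesis
      using ab by (auto intro!: continuous_intros dest!: pos)
  qed
  ultimately have "convex_on {0..1} ?g"
    using convex_on_closure[of "{0<..<1::real}" ?g] by simp
  then have "convex_on {0..1} (\<lambda>x. ?g x + - 1)"
    by (intro convex_on_add) (auto simp: convex_on_const)
  then show ?thesis
    unfolding concave_on_def by simp
qed

end
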